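(* Let $q\in\mathbb{C}$, $|q|<1$. For each $\mathfrak{t}\in\{\widetilde{\mathrm{I}},\mathrm{II},\mathrm{III},\widetilde{\mathrm{IV}}\}$ and all $u,v\in\mathfrak{A}^0_{\mathfrak{t}}$, $$\mathfrak{z}_q[u*_{\mathfrak{t}}v]=\mathfrak{z}_q[u]\,\mathfrak{z}_q[v].$$
   Context: For integer tuples $\mathbf{t},\mathbf{s}$ of length $d$ put $\mathfrak{z}_q^{\mathbf{t}}[\mathbf{s}]=\sum_{k_1>\dots>k_d>0}\prod_{j=1}^d\frac{q^{k_jt_j}}{(1-q^{k_j})^{s_j}}$. All algebras are over $\mathbb{Q}$; $\mathbf{1}$ is the empty word. For a free algebra on a set of letters with a commutative bilinear product $[\cdot,\cdot]$ on the span of letters, the associated stuffle $*$ is the bilinear product with $\mathbf{1}*u=u*\mathbf{1}=u$ and $(\alpha u)*(\beta v)=\alpha(u*\beta v)+\beta(\alpha u*v)+[\alpha,\beta](u*v)$ ($\alpha,\beta$ letters, $u,v$ words). Type $\widetilde{\mathrm{I}}$: $\mathfrak{A}^1_{\widetilde{\mathrm{I}}}$ = free algebra on $\theta$, $z_k$ ($k\ge1$), $[z_k,z_l]=z_{k+l}+z_{k+l-1}$, $[\theta,z_k]=[z_k,\theta]=z_{k+1}$, $[\theta,\theta]=z_2-\theta$. $\mathfrak{A}^0_{\widetilde{\mathrm{I}}}=\mathbb{Q}\mathbf{1}+\theta\mathfrak{A}^1_{\widetilde{\mathrm{I}}}+\sum_{k\ge2}z_k\mathfrak{A}^1_{\widetilde{\mathrm{I}}}$.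 $\mathfrak{z}_q$ is $\mathbb{Q}$-linear with $\mathfrak{z}_q[\mathbf{1}]=1$ and $\mathfrak{z}_q[y_1\cdots y_d]=\sum_{k_1>\dots>k_d>0}\prod_jM_{k_j}(y_j)$, $M_k(\theta)=\frac{q^k}{1-q^k}$, $M_k(z_s)=\frac{q^{(s-1)k}}{(1-q^k)^s}$. Type II: $\mathfrak{A}^1_{\mathrm{II}}$ = free algebra on $z'_k$ ($k\ge0$), $[z'_k,z'_l]=z'_{k+l}$; $\mathfrak{A}^0_{\mathrm{II}}=\mathbb{Q}\mathbf{1}+\sum_{k\ge1}z'_k\mathfrak{A}^1_{\mathrm{II}}$; $\mathfrak{z}_q[\mathbf{1}]=1$, $\mathfrak{z}_q[z'_{s_1}\cdots z'_{s_d}]=\mathfrak{z}_q^{(s_1,\dots,s_d)}[s_1,\dots,s_d]$. Type III: $B$ = free algebra on $z_k$ ($k\in\mathbb{Z}$) with stuffle $*_B$ from $[z_k,z_l]=z_{k+l}$. $\mathfrak{A}^0_{\mathrm{III}}$ = $\mathbb{Q}$-span of symbols $z'_kw$ ($k\in\mathbb{Z}$, $w$ a word of $B$). $\sigma_-(z'_nw):=z_nw-z_{n-1}w$. $z'_ku*_{\mathrm{III}}z'_lv:=z'_k(u*_B\sigma_-(z'_lv))+z'_l(\sigma_-(z'_ku)*_Bv)+(z'_{k+l}-z'_{k+l-1})(u*_Bv)$, extended bilinearly. $\mathfrak{z}_q[z'_{s_1}z_{s_2}\cdots z_{s_d}]=\mathfrak{z}_q^{(1,0,\dots,0)}[s_1,\dots,s_d]$,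 extended linearly. Type $\widetilde{\mathrm{IV}}$: $C$ = free algebra on $z'_k$ ($k\ge0$) with stuffle $*_C$ from $[z'_k,z'_l]=z'_{k+l}$. $\mathfrak{A}^1_{\widetilde{\mathrm{IV}}}=\mathbb{Q}\mathbf{1}\oplus\theta C\oplus\bigoplus_{k\ge1}z_kC$, $\mathfrak{A}^0_{\widetilde{\mathrm{IV}}}=\mathbb{Q}\mathbf{1}\oplus\theta C\oplus\bigoplus_{k\ge2}z_kC$. $\sigma_+(z_nw):=z'_nw+z'_{n-1}w$. $*_{\widetilde{\mathrm{IV}}}$ is bilinear with unit $\mathbf{1}$ and for $k,l\ge1$, words $u,v\in C$: $z_ku*z_lv=z_k(u*_C\sigma_+(z_lv))+z_l(\sigma_+(z_ku)*_Cv)+(z_{k+l}+z_{k+l-1})(u*_Cv)$; $z_ku*\theta v=\theta v*z_ku=z_k(u*_Cz'_1v)+\theta(\sigma_+(z_ku)*_Cv)+z_{k+1}(u*_Cv)$; $\theta u*\theta v=\theta(u*_Cz'_1v)+\theta(z'_1u*_Cv)+(z_2-\theta)(u*_Cv)$. $\mathfrak{z}_q[\mathbf{1}]=1$, $\mathfrak{z}_q[\theta z'_{s_2}\cdots z'_{s_d}]=\mathfrak{z}_q^{(1,s_2,\dots,s_d)}[1,s_2,\dots,s_d]$, $\mathfrak{z}_q[z_{s_1}z'_{s_2}\cdots z'_{s_d}]=\mathfrak{z}_q^{(s_1-1,s_2,\dots,s_d)}[s_1,\dots,s_d]$, extended linearly. *)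

theory Defs
  imports "HOL-Analysis.Analysis"
begin

text \<open>An element of a free Q-algebra (or of a Q-span of symbols) is represented as a finite
  formal linear combination: a list of (coefficient, basis element) pairs.\<close>

type_synonym 'w lc = "(rat \<times> 'w) list"

definition lc_map :: "('w \<Rightarrow> 'v) \<Rightarrow> 'w lc \<Rightarrow> 'v lc" where
  "lc_map f xs = map (\<lambda>(c, w). (c, f w)) xs"

definition lc_bilin :: "('w \<Rightarrow> 'v \<Rightarrow> 'u lc) \<Rightarrow> 'w lc \<Rightarrow> 'v lc \<Rightarrow> 'u lc" where
  "lc_bilin P xs ys =
     concat (map (\<lambda>(a, x). concat (map (\<lambda>(b, y). map (\<lambda>(c, w). (a * b * c, w)) (P x y)) ys)) xs)"

definition lc_eval :: "('w \<Rightarrow> complex) \<Rightarrow> 'w lc \<Rightarrow> complex" where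
  "lc_eval f xs = (\<Sum>(c, w)\<leftarrow>xs. of_real (of_rat c) * f w)"

fun stuffle :: "('a \<Rightarrow> 'a \<Rightarrow> 'a lc) \<Rightarrow> 'a list \<Rightarrow> 'a list \<Rightarrow> 'a list lc" where
  "stuffle br [] v = [(1, v)]"
| "stuffle br (a # u) [] = [(1, a # u)]"
| "stuffle br (a # u) (b # v) =
     lc_map (\<lambda>w. a # w) (stuffle br u (b # v))
   @ lc_map (\<lambda>w. b # w) (stuffle br (a # u) v)
   @ concat (map (\<lambda>(c, l). map (\<lambda>(c', w). (c * c', l # w)) (stuffle br u v)) (br a b))"

definition dec_tuples :: "nat \<Rightarrow> nat list set" where
  "dec_tuples d = {ks. length ks = d \<and> sorted_wrt (>) ks \<and> (\<forall>k\<in>set ks. 0 < k)}"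

text \<open>\<open>\<zeta>_q^t[s] = \<Sum>_{k\<^sub>1>\<dots>>k\<^sub>d>0} \<Prod>_j q^{k_j t_j} / (1 - q^{k_j})^{s_j}\<close>
  for integer tuples t, s of length d (sum taken as an unordered/absolute sum).\<close>
definition zq_ts :: "complex \<Rightarrow> int list \<Rightarrow> int list \<Rightarrow> complex" where
  "zq_ts q t s = infsum (\<lambda>ks. \<Prod>j<length s.
       q powi (int (ks ! j) * t ! j) / (1 - q ^ (ks ! j)) powi (s ! j)) (dec_tuples (length s))"

datatype letterI = Theta | Z nat

fun validI :: "letterI \<Rightarrow> bool" where
  "validI Theta = True"
| "validI (Z k) = (1 \<le> k)"

fun bracketI :: "letterI \<Rightarrow> letterI \<Rightarrow> letterI lc" where
  "bracketI (Z k) (Z l) = [(1, Z (k + l)), (1, Z (k + l - 1))]"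
| "bracketI Theta (Z k) = [(1, Z (k + 1))]"
| "bracketI (Z k) Theta = [(1, Z (k + 1))]"
| "bracketI Theta Theta = [(1, Z 2), (-1, Theta)]"

definition stuffleI :: "letterI list \<Rightarrow> letterI list \<Rightarrow> letterI list lc" where
  "stuffleI = stuffle bracketI"

text \<open>Words spanning \<open>\<AA>\<^sup>0\<close>: the empty word, or words over the alphabet whose first letter is not \<open>z\<^sub>1\<close>.\<close>
definition admI :: "letterI list \<Rightarrow> bool" where
  "admI w = ((\<forall>y\<in>set w. validI y) \<and> (w = [] \<or> hd w \<noteq> Z 1))"

fun MI :: "complex \<Rightarrow> nat \<Rightarrow> letterI \<Rightarrow> complex" where
  "MI q k Theta = q ^ k / (1 - q ^ k)"
| "MI q k (Z s) = q ^ ((s - 1) * k) / (1 - q ^ k) ^ s"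

definition zqI :: "complex \<Rightarrow> letterI list \<Rightarrow> complex" where
  "zqI q w = infsum (\<lambda>ks. \<Prod>j<length w. MI q (ks ! j) (w ! j)) (dec_tuples (length w))"

text \<open>Letters \<open>z'\<^sub>k\<close> (k \<ge> 0) are represented by \<open>k :: nat\<close>.\<close>
definition bracketII :: "nat \<Rightarrow> nat \<Rightarrow> nat lc" where
  "bracketII k l = [(1, k + l)]"

definition stuffleII :: "nat list \<Rightarrow> nat list \<Rightarrow> nat list lc" where
  "stuffleII = stuffle bracketII"

definition admII :: "nat list \<Rightarrow> bool" where
  "admII w = (w = [] \<or> 1 \<le> hd w)"

definition zqII :: "complex \<Rightarrow> nat list \<Rightarrow> complex" where
  "zqII q w = zq_ts q (map int w) (map int w)"

text \<open>B: free algebra on \<open>z\<^sub>k\<close> (k \<in> \<int>), letters represented by \<open>k :: int\<close>.\<close>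
definition bracketB :: "int \<Rightarrow> int \<Rightarrow> int lc" where
  "bracketB k l = [(1, k + l)]"

definition stuffleB :: "int list \<Rightarrow> int list \<Rightarrow> int list lc" where
  "stuffleB = stuffle bracketB"

text \<open>The symbol \<open>z'\<^sub>k w\<close> of \<open>\<AA>\<^sup>0_III\<close> is represented by the pair \<open>(k, w)\<close>.\<close>
definition sigma_minus :: "int \<times> int list \<Rightarrow> int list lc" where
  "sigma_minus x = (case x of (n, w) \<Rightarrow> [(1, n # w), (-1, (n - 1) # w)])"

fun stuffleIII :: "int \<times> int list \<Rightarrow> int \<times> int list \<Rightarrow> (int \<times> int list) lc" where
  "stuffleIII (k, u) (l, v) =
     lc_map (\<lambda>w. (k, w)) (lc_bilin stuffleB [(1, u)] (sigma_minus (l, v)))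
   @ lc_map (\<lambda>w. (l, w)) (lc_bilin stuffleB (sigma_minus (k, u)) [(1, v)])
   @ lc_map (\<lambda>w. (k + l, w)) (stuffleB u v)
   @ map (\<lambda>(c, w). (- c, (k + l - 1, w))) (stuffleB u v)"

definition zqIII :: "complex \<Rightarrow> int \<times> int list \<Rightarrow> complex" where
  "zqIII q x = (case x of (s1, w) \<Rightarrow> zq_ts q (1 # replicate (length w) 0) (s1 # w))"

text \<open>C: free algebra on \<open>z'\<^sub>k\<close> (k \<ge> 0), letters represented by \<open>k :: nat\<close>, with stuffle
  \<open>*\<^sub>C\<close> = \<open>stuffleII\<close>. Basis of \<open>\<AA>\<^sup>1_IV\<close>: \<open>\<one>\<close>, \<open>\<theta> u\<close>, \<open>z\<^sub>k u\<close> (k \<ge> 1, u a word of C).\<close>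

datatype wordIV = One | ThW "nat list" | ZW nat "nat list"

definition stuffleC :: "nat list \<Rightarrow> nat list \<Rightarrow> nat list lc" where
  "stuffleC = stuffle bracketII"

definition sigma_plus :: "nat \<Rightarrow> nat list \<Rightarrow> nat list lc" where
  "sigma_plus n w = [(1, n # w), (1, (n - 1) # w)]"

fun stuffleIV :: "wordIV \<Rightarrow> wordIV \<Rightarrow> wordIV lc" where
  "stuffleIV One x = [(1, x)]"
| "stuffleIV (ThW u) One = [(1, ThW u)]"
| "stuffleIV (ZW k u) One = [(1, ZW k u)]"
| "stuffleIV (ZW k u) (ZW l v) =
     lc_map (ZW k) (lc_bilin stuffleC [(1, u)] (sigma_plus l v))
   @ lc_map (ZW l) (lc_bilin stuffleC (sigma_plus k u) [(1, v)])
   @ lc_map (ZW (k + l)) (stuffleC u v)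
   @ lc_map (ZW (k + l - 1)) (stuffleC u v)"
| "stuffleIV (ZW k u) (ThW v) =
     lc_map (ZW k) (stuffleC u (1 # v))
   @ lc_map ThW (lc_bilin stuffleC (sigma_plus k u) [(1, v)])
   @ lc_map (ZW (k + 1)) (stuffleC u v)"
| "stuffleIV (ThW v) (ZW k u) =
     lc_map (ZW k) (stuffleC u (1 # v))
   @ lc_map ThW (lc_bilin stuffleC (sigma_plus k u) [(1, v)])
   @ lc_map (ZW (k + 1)) (stuffleC u v)"
| "stuffleIV (ThW u) (ThW v) =
     lc_map ThW (stuffleC u (1 # v))
   @ lc_map ThW (stuffleC (1 # u) v)
   @ lc_map (ZW 2) (stuffleC u v)
   @ map (\<lambda>(c, w). (- c, ThW w)) (stuffleC u v)"

text \<open>Basis of \<open>\<AA>\<^sup>0_IV\<close>: \<open>\<one>\<close>, \<open>\<theta> u\<close>, \<open>z\<^sub>k u\<close> with k \<ge> 2.\<close>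
fun admIV :: "wordIV \<Rightarrow> bool" where
  "admIV One = True"
| "admIV (ThW u) = True"
| "admIV (ZW k u) = (2 \<le> k)"

fun zqIV :: "complex \<Rightarrow> wordIV \<Rightarrow> complex" where
  "zqIV q One = 1"
| "zqIV q (ThW u) = zq_ts q (1 # map int u) (1 # map int u)"
| "zqIV q (ZW s1 u) = zq_ts q ((int s1 - 1) # map int u) (int s1 # map int u)"

end

theory Submission
  imports Defs
begin

text \<open>Cut every \<open>\<zeta>\<^sub>q\<close>-value off at \<open>k\<^sub>1 < N\<close>. A truncated nested sum is multiplicative for the
  quasi-shuffle product as soon as the bracket of letters is multiplicative pointwise in \<open>k\<close>:
  the product of two sums over \<open>k < N\<close> splits into the two triangles \<open>k < l\<close>, \<open>l < k\<close> and the
  diagonal, and induction on the words handles the rest. With \<open>x = q\<^sup>k\<close> every pointwise identity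
  needed here comes from \<open>x^a/(1-x)^b \<cdot> x^c/(1-x)^d = x^(a+c)/(1-x)^(b+d)\<close> and
  \<open>x + (1 - x) = 1\<close>. In types \<open>III\<close> and \<open>IV\<close> the first letter of a word carries a different
  factor than the later ones, and \<open>\<sigma>\<^sub>\<plusminus>\<close> translate one kind into the other, so the same splitting
  applies. Finally, on admissible words (which are closed under the product) the first factor
  decays like \<open>|q|\<^sup>k\<close> while all others stay bounded, so the nested sums converge absolutely and
  the identity passes to the limit \<open>N \<rightarrow> \<infinity>\<close>.\<close>

section \<open>Formal linear combinations\<close>

lemma lc_eval_Nil [simp]: "lc_eval f [] = 0"
  by (simp add: lc_eval_def)

lemma lc_eval_Cons [simp]: "lc_eval f ((c, w) # xs) = of_real (of_rat c) * f w + lc_eval f xs"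
  by (simp add: lc_eval_def)

lemma lc_eval_append [simp]: "lc_eval f (xs @ ys) = lc_eval f xs + lc_eval f ys"
  by (simp add: lc_eval_def)

lemma lc_eval_lc_map [simp]: "lc_eval f (lc_map g xs) = lc_eval (\<lambda>w. f (g w)) xs"
  by (induction xs) (auto simp: lc_map_def)

lemma lc_eval_scale:
  "lc_eval f (map (\<lambda>(c, w). (a * c, w)) xs) = of_real (of_rat a) * lc_eval f xs"
  by (induction xs) (auto simp: of_rat_mult algebra_simps)

lemma lc_eval_map_uminus [simp]:
  "lc_eval f (map (\<lambda>(c, w). (- c, g w)) xs) = - lc_eval (\<lambda>w. f (g w)) xs"
  by (induction xs) (auto simp: of_rat_minus)

lemma lc_eval_sum: "lc_eval (\<lambda>w. \<Sum>n\<in>A. h n w) xs = (\<Sum>n\<in>A. lc_eval (h n) xs)"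
  by (induction xs) (auto simp: sum.distrib sum_distrib_left)

lemma lc_eval_cmult: "lc_eval (\<lambda>w. k * h w) xs = k * lc_eval h xs"
  by (induction xs) (auto simp: algebra_simps)

lemma lc_eval_multc: "lc_eval (\<lambda>w. h w * k) xs = lc_eval h xs * k"
  by (induction xs) (auto simp: algebra_simps)

lemma lc_eval_prefix_letters:
  "lc_eval f (concat (map (\<lambda>(c, l). map (\<lambda>(c', w). (c * c', l # w)) ws) ls))
    = lc_eval (\<lambda>l. lc_eval (\<lambda>w. f (l # w)) ws) ls"
proof (induction ls)
  case (Cons p ls)
  obtain c l where "p = (c, l)" by force
  moreover have "lc_eval f (map (\<lambda>(c', w). (c * c', l # w)) ws) = of_real (of_rat c) * lc_eval (\<lambda>w. f (l # w)) ws"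
    by (induction ws) (auto simp: of_rat_mult algebra_simps)
  ultimately show ?case using Cons by simp
qed simp

lemma lc_eval_bilin:
  assumes "\<And>x y. x \<in> snd ` set xs \<Longrightarrow> y \<in> snd ` set ys \<Longrightarrow> lc_eval f (P x y) = g x * h y"
  shows "lc_eval f (lc_bilin P xs ys) = lc_eval g xs * lc_eval h ys"
  using assms
proof (induction xs)
  case Nil
  then show ?case by (simp add: lc_bilin_def)
next
  case (Cons ax xs)
  obtain a x where ax: "ax = (a, x)" by force
  have "lc_eval f (concat (map (\<lambda>(b, y). map (\<lambda>(c, w). (a * b * c, w)) (P x y)) ys))
      = of_real (of_rat a) * g x * lc_eval h ys"
    using Cons.prems[of x] ax
  proof (induction ys)
    case (Cons p ys)
    obtain b y where "p = (b, y)" by force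
    moreover have "lc_eval f (map (\<lambda>(c, w). (a * b * c, w)) (P x y))
        = of_real (of_rat a) * of_real (of_rat b) * (g x * h y)"
      using Cons.prems \<open>p = (b, y)\<close> by (simp add: lc_eval_scale of_rat_mult)
    ultimately show ?case using Cons by (simp add: algebra_simps)
  qed simp
  with Cons ax show ?case by (simp add: lc_bilin_def algebra_simps)
qed

lemma lc_eval_bilin_mult:
  "(\<And>x y. lc_eval f (P x y) = f x * f y) \<Longrightarrow> lc_eval f (lc_bilin P xs ys) = lc_eval f xs * lc_eval f ys"
  by (rule lc_eval_bilin)

lemma lc_eval_tendsto:
  assumes "\<And>w. w \<in> snd ` set xs \<Longrightarrow> (\<lambda>N. F N w) \<longlonglongrightarrow> G w"
  shows "(\<lambda>N. lc_eval (F N) xs) \<longlonglongrightarrow> lc_eval G xs"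
  using assms by (induction xs) (auto intro!: tendsto_intros)

lemma snd_set_lc_bilin:
  "w \<in> snd ` set (lc_bilin P xs ys) \<Longrightarrow> \<exists>x\<in>snd ` set xs. \<exists>y\<in>snd ` set ys. w \<in> snd ` set (P x y)"
  by (force simp: lc_bilin_def)

lemma snd_set_lc_map: "snd ` set (lc_map f xs) = f ` snd ` set xs"
  by (force simp: lc_map_def)

lemma lc_eval_bilin_limit:
  assumes mult: "\<And>N x y. adm x \<Longrightarrow> adm y \<Longrightarrow> lc_eval (F N) (P x y) = F N x * F N y"
    and lim: "\<And>w. adm w \<Longrightarrow> (\<lambda>N. F N w) \<longlonglongrightarrow> G w"
    and closed: "\<And>x y w. adm x \<Longrightarrow> adm y \<Longrightarrow> w \<in> snd ` set (P x y) \<Longrightarrow> adm w"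
    and xs: "\<forall>(c, w)\<in>set xs. adm w" and ys: "\<forall>(c, w)\<in>set ys. adm w"
  shows "lc_eval G (lc_bilin P xs ys) = lc_eval G xs * lc_eval G ys"
proof -
  have xs': "adm w" if "w \<in> snd ` set xs" for w using xs that by auto
  have ys': "adm w" if "w \<in> snd ` set ys" for w using ys that by auto
  have "(\<lambda>N. lc_eval (F N) (lc_bilin P xs ys)) \<longlonglongrightarrow> lc_eval G (lc_bilin P xs ys)"
  proof (rule lc_eval_tendsto)
    fix w assume "w \<in> snd ` set (lc_bilin P xs ys)"
    then obtain x y where "x \<in> snd ` set xs" "y \<in> snd ` set ys" "w \<in> snd ` set (P x y)"
      using snd_set_lc_bilin by metis
    then show "(\<lambda>N. F N w) \<longlonglongrightarrow> G w" using lim closed xs' ys' by blast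
  qed
  moreover have "lc_eval (F N) (lc_bilin P xs ys) = lc_eval (F N) xs * lc_eval (F N) ys" for N
    by (intro lc_eval_bilin mult xs' ys')
  moreover have "(\<lambda>N. lc_eval (F N) xs * lc_eval (F N) ys) \<longlonglongrightarrow> lc_eval G xs * lc_eval G ys"
    by (intro tendsto_mult lc_eval_tendsto lim xs' ys')
  ultimately show ?thesis
    using LIMSEQ_unique by simp
qed

section \<open>Truncated nested sums\<close>

fun nested_sum :: "nat \<Rightarrow> (nat \<Rightarrow> 'a::comm_semiring_1) list \<Rightarrow> 'a" where
  "nested_sum N [] = 1"
| "nested_sum N (g # gs) = (\<Sum>n\<in>{1..<N}. g n * nested_sum n gs)"

lemma sum_mult_sum_triangles:
  fixes x y :: "nat \<Rightarrow> 'a::comm_ring_1"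
  shows "(\<Sum>n\<in>{1..<N}. x n) * (\<Sum>m\<in>{1..<N}. y m) =
     (\<Sum>n\<in>{1..<N}. x n * (\<Sum>m\<in>{1..<n}. y m)) + (\<Sum>m\<in>{1..<N}. y m * (\<Sum>n\<in>{1..<m}. x n))
     + (\<Sum>n\<in>{1..<N}. x n * y n)"
proof (induction N)
  case (Suc N)
  show ?case
  proof (cases "N = 0")
    case False
    then have "{1..<Suc N} = insert N {1..<N}" by auto
    with Suc.IH show ?thesis by (simp add: algebra_simps sum_distrib_left sum_distrib_right)
  qed simp
qed simp

lemma nested_sum_Cons_mult:
  fixes g h :: "nat \<Rightarrow> 'a::comm_ring_1"
  assumes diag: "\<And>n. n \<in> {1..<N} \<Longrightarrow> d n = g n * h n"
  shows "nested_sum N (g # gs) * nested_sum N (h # hs) =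
      (\<Sum>n\<in>{1..<N}. g n * (nested_sum n gs * nested_sum n (h # hs)))
    + (\<Sum>n\<in>{1..<N}. h n * (nested_sum n (g # gs) * nested_sum n hs))
    + (\<Sum>n\<in>{1..<N}. d n * (nested_sum n gs * nested_sum n hs))"
proof -
  have "(\<Sum>n\<in>{1..<N}. d n * (nested_sum n gs * nested_sum n hs))
      = (\<Sum>n\<in>{1..<N}. g n * nested_sum n gs * (h n * nested_sum n hs))"
    by (rule sum.cong) (simp_all add: diag mult_ac)
  then show ?thesis
    by (simp only: nested_sum.simps sum_mult_sum_triangles) (simp add: sum_distrib_left mult_ac)
qed

lemma lc_eval_nested_sum_Cons:
  "lc_eval (\<lambda>w. nested_sum N (g # f w)) xs = (\<Sum>n\<in>{1..<N}. g n * lc_eval (\<lambda>w. nested_sum n (f w)) xs)"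
  by (simp add: lc_eval_sum lc_eval_cmult)

lemma nested_sum_stuffle:
  fixes val :: "'l \<Rightarrow> nat \<Rightarrow> complex"
  assumes br: "\<And>a b n. a \<in> A \<Longrightarrow> b \<in> A \<Longrightarrow> 1 \<le> n \<Longrightarrow>
      lc_eval (\<lambda>l. val l n) (br a b) = val a n * val b n"
    and "set u \<subseteq> A" "set v \<subseteq> A"
  shows "lc_eval (\<lambda>w. nested_sum N (map val w)) (stuffle br u v) =
    nested_sum N (map val u) * nested_sum N (map val v)"
  using assms
proof (induction br u v arbitrary: N rule: stuffle.induct)
  case (3 br a u b v)
  let ?S = "\<lambda>n w. nested_sum n (map val w)"
  have "a \<in> A" "b \<in> A" "set u \<subseteq> A" "set v \<subseteq> A"
    using "3.prems"(2,3) by auto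
  have bracket_IH: "lc_eval (\<lambda>l. val l n) (br a b) * lc_eval (?S n) (stuffle br u v)
      = lc_eval (\<lambda>l. val l n) (br a b) * (?S n u * ?S n v)" for n
  proof (cases "br a b")
    case (Cons p ps)
    then show ?thesis using "3.IH"(3)[of p "fst p" "snd p"] "3.prems" by auto
  qed simp
  have "lc_eval (?S N) (stuffle br (a # u) (b # v)) =
      (\<Sum>n\<in>{1..<N}. val a n * (?S n u * ?S n (b # v)))
    + (\<Sum>n\<in>{1..<N}. val b n * (?S n (a # u) * ?S n v))
    + (\<Sum>n\<in>{1..<N}. lc_eval (\<lambda>l. val l n) (br a b) * (?S n u * ?S n v))"
    using "3.IH"(1,2)[OF "3.prems"(1)] \<open>set u \<subseteq> A\<close> \<open>set v \<subseteq> A\<close> \<open>a \<in> A\<close> \<open>b \<in> A\<close>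
    by (simp add: bracket_IH lc_eval_prefix_letters lc_eval_sum lc_eval_cmult lc_eval_multc mult_ac)
  also have "\<dots> = ?S N (a # u) * ?S N (b # v)"
    unfolding list.map
    by (rule nested_sum_Cons_mult[symmetric]) (auto intro: "3.prems"(1) \<open>a \<in> A\<close> \<open>b \<in> A\<close>)
  finally show ?case .
qed simp_all

lemma snd_set_prefix_letters:
  "snd ` set (concat (map (\<lambda>(c, l). map (\<lambda>(c', w). (c * c', l # w)) ws) ls))
    = (\<Union>l\<in>snd ` set ls. (#) l ` snd ` set ws)"
  by (force simp: image_image case_prod_beta)

lemma snd_set_stuffle_Cons_Cons:
  "snd ` set (stuffle br (a # u) (b # v)) =
     (#) a ` snd ` set (stuffle br u (b # v)) \<union> (#) b ` snd ` set (stuffle br (a # u) v)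
     \<union> (\<Union>l\<in>snd ` set (br a b). (#) l ` snd ` set (stuffle br u v))"
  by (simp only: stuffle.simps set_append image_Un snd_set_lc_map snd_set_prefix_letters Un_assoc)

lemma stuffle_letters_closed:
  assumes "set u \<subseteq> A" "set v \<subseteq> A" "\<And>a b. a \<in> A \<Longrightarrow> b \<in> A \<Longrightarrow> snd ` set (br a b) \<subseteq> A"
    and "w \<in> snd ` set (stuffle br u v)"
  shows "set w \<subseteq> A"
  using assms
proof (induction br u v arbitrary: w rule: stuffle.induct)
  case (3 br a u b v)
  note closed = "3.prems"(3)
  have "a \<in> A" "b \<in> A" "set u \<subseteq> A" "set v \<subseteq> A" "set (a # u) \<subseteq> A" "set (b # v) \<subseteq> A"
    using "3.prems"(1,2) by simp_all
  from "3.prems"(4) consider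
      (left) w' where "w = a # w'" "w' \<in> snd ` set (stuffle br u (b # v))"
    | (right) w' where "w = b # w'" "w' \<in> snd ` set (stuffle br (a # u) v)"
    | (bracket) l w' where "w = l # w'" "l \<in> snd ` set (br a b)" "w' \<in> snd ` set (stuffle br u v)"
    unfolding snd_set_stuffle_Cons_Cons by (elim UnE UN_E imageE[where f = "(#) _"]) (rule that; assumption)+
  then show ?case
  proof cases
    case left
    with "3.IH"(1)[OF \<open>set u \<subseteq> A\<close> \<open>set (b # v) \<subseteq> A\<close> closed] \<open>a \<in> A\<close> show ?thesis by simp
  next
    case right
    with "3.IH"(2)[OF \<open>set (a # u) \<subseteq> A\<close> \<open>set v \<subseteq> A\<close> closed] \<open>b \<in> A\<close> show ?thesis by simp
  next
    case bracket
    then obtain c where "(c, l) \<in> set (br a b)" by auto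
    moreover have "l \<in> A" using bracket(2) closed[OF \<open>a \<in> A\<close> \<open>b \<in> A\<close>] by blast
    ultimately show ?thesis
      using bracket "3.IH"(3)[OF _ refl \<open>set u \<subseteq> A\<close> \<open>set v \<subseteq> A\<close> closed] by simp
  qed
qed simp_all

lemma stuffle_hd_closed:
  assumes "u = [] \<or> hd u \<in> D" "v = [] \<or> hd v \<in> D" "\<And>a b. a \<in> D \<Longrightarrow> b \<in> D \<Longrightarrow> snd ` set (br a b) \<subseteq> D"
    and "w \<in> snd ` set (stuffle br u v)"
  shows "w = [] \<or> hd w \<in> D"
proof (cases "(br, u, v)" rule: stuffle.cases)
  case (3 _ a u' b v')
  with assms(4) have "w \<in> snd ` set (stuffle br (a # u') (b # v'))" by simp
  then have "hd w \<in> {a, b} \<union> snd ` set (br a b)"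
    unfolding snd_set_stuffle_Cons_Cons by (elim UnE UN_E imageE) simp_all
  moreover have "a \<in> D" "b \<in> D" using 3 assms(1,2) by simp_all
  ultimately have "hd w \<in> D" using assms(3)[of a b] by blast
  then show ?thesis ..
next
  case (1 _ v')
  then show ?thesis using assms(2,4) by simp
next
  case (2 _ a u')
  then show ?thesis using assms(1,4) by simp
qed

section \<open>Nested sums as limits of their truncations\<close>

definition tuple_prod :: "(nat \<Rightarrow> 'a::comm_semiring_1) list \<Rightarrow> nat list \<Rightarrow> 'a" where
  "tuple_prod gs ks = (\<Prod>j<length gs. (gs ! j) (ks ! j))"

definition nested_infsum :: "(nat \<Rightarrow> complex) list \<Rightarrow> complex" where
  "nested_infsum gs = infsum (tuple_prod gs) (dec_tuples (length gs))"

definition dec_tuples_below :: "nat \<Rightarrow> nat \<Rightarrow> nat list set" where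
  "dec_tuples_below N d = {ks \<in> dec_tuples d. \<forall>k\<in>set ks. k < N}"

lemma tuple_prod_Cons [simp]: "tuple_prod (g # gs) (n # ks) = g n * tuple_prod gs ks"
  by (simp add: tuple_prod_def prod.lessThan_Suc_shift del: prod.lessThan_Suc)

lemma dec_tuples_0: "dec_tuples 0 = {[]}"
  by (auto simp: dec_tuples_def)

lemma nested_infsum_Nil [simp]: "nested_infsum [] = 1"
  by (simp add: nested_infsum_def dec_tuples_0 tuple_prod_def)

lemma dec_tuples_below_0: "dec_tuples_below N 0 = {[]}"
  by (auto simp: dec_tuples_below_def dec_tuples_def)

lemma dec_tuples_below_Suc:
  "dec_tuples_below N (Suc d) = (\<lambda>(n, ks). n # ks) ` (SIGMA n:{1..<N}. dec_tuples_below n d)"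
proof (intro set_eqI iffI)
  fix x assume "x \<in> dec_tuples_below N (Suc d)"
  then obtain n ks where "x = n # ks" "(n, ks) \<in> (SIGMA n:{1..<N}. dec_tuples_below n d)"
    by (cases x) (auto simp: dec_tuples_below_def dec_tuples_def)
  then show "x \<in> (\<lambda>(n, ks). n # ks) ` (SIGMA n:{1..<N}. dec_tuples_below n d)" by force
qed (fastforce simp: dec_tuples_below_def dec_tuples_def)

lemma dec_tuples_below_subset: "dec_tuples_below N d \<subseteq> dec_tuples d"
  by (auto simp: dec_tuples_below_def)

lemma finite_dec_tuples_below: "finite (dec_tuples_below N d)"
  by (induction d arbitrary: N) (auto simp: dec_tuples_below_0 dec_tuples_below_Suc)

lemma nested_sum_eq_sum_dec_tuples_below:
  "nested_sum N gs = sum (tuple_prod gs) (dec_tuples_below N (length gs))"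
proof (induction gs arbitrary: N)
  case Nil
  then show ?case by (simp add: dec_tuples_below_0 tuple_prod_def)
next
  case (Cons g gs)
  have inj: "inj_on (\<lambda>(n, ks). n # ks) (SIGMA n:{1..<N}. dec_tuples_below n (length gs))"
    by (auto simp: inj_on_def)
  have "sum (tuple_prod (g # gs)) (dec_tuples_below N (length (g # gs)))
      = (\<Sum>(n, ks)\<in>(SIGMA n:{1..<N}. dec_tuples_below n (length gs)). g n * tuple_prod gs ks)"
    by (simp only: length_Cons dec_tuples_below_Suc sum.reindex[OF inj]) (simp add: case_prod_beta)
  also have "\<dots> = (\<Sum>n\<in>{1..<N}. \<Sum>ks\<in>dec_tuples_below n (length gs). g n * tuple_prod gs ks)"
    by (rule sum.Sigma[symmetric]) (auto simp: finite_dec_tuples_below)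
  finally show ?case by (simp add: Cons sum_distrib_left)
qed

lemma eventually_subset_dec_tuples_below:
  assumes "finite X" "X \<subseteq> dec_tuples d"
  shows "eventually (\<lambda>N. X \<subseteq> dec_tuples_below N d) sequentially"
proof -
  define M where "M = Max (insert 0 (\<Union>(set ` X)))"
  have "X \<subseteq> dec_tuples_below N d" if "M < N" for N
  proof
    fix ks assume "ks \<in> X"
    then have "\<forall>k\<in>set ks. k \<le> M"
      using assms(1) unfolding M_def by (auto intro: Max_ge)
    then show "ks \<in> dec_tuples_below N d"
      using \<open>ks \<in> X\<close> assms(2) that by (auto simp: dec_tuples_below_def)
  qed
  then show ?thesis
    unfolding eventually_sequentially by (metis Suc_le_lessD)
qed

lemma nested_sum_tendsto_nested_infsum:
  assumes "tuple_prod gs summable_on dec_tuples (length gs)"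
  shows "(\<lambda>N. nested_sum N gs) \<longlonglongrightarrow> nested_infsum gs"
proof -
  have "(sum (tuple_prod gs) \<longlongrightarrow> nested_infsum gs) (finite_subsets_at_top (dec_tuples (length gs)))"
    using assms unfolding nested_infsum_def by (simp add: has_sum_def[symmetric] has_sum_infsum)
  moreover have "filterlim (\<lambda>N. dec_tuples_below N (length gs))
      (finite_subsets_at_top (dec_tuples (length gs))) sequentially"
    unfolding filterlim_finite_subsets_at_top
    using eventually_subset_dec_tuples_below
    by (simp add: finite_dec_tuples_below dec_tuples_below_subset)
  ultimately show ?thesis
    unfolding nested_sum_eq_sum_dec_tuples_below by (rule filterlim_compose)
qed

lemma summable_real_power_mult_geometric:
  fixes x :: real
  assumes "\<bar>x\<bar> < 1"
  shows "summable (\<lambda>n. real n ^ d * x ^ n)"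
  using assms
proof (induction d arbitrary: x)
  case 0
  then show ?case by (simp add: summable_geometric)
next
  case (Suc d)
  have summable: "summable (\<lambda>n. diffs (\<lambda>n. real n ^ d) n * \<bar>x\<bar> ^ n)"
    by (rule termdiff_converges[of "\<bar>x\<bar>" 1]) (use Suc in auto)
  have bound: "norm (real n ^ Suc d * x ^ n) \<le> diffs (\<lambda>n. real n ^ d) n * \<bar>x\<bar> ^ n" for n
  proof -
    have "real n ^ Suc d \<le> real (Suc n) ^ Suc d" by (rule power_mono) auto
    then show ?thesis by (simp add: diffs_def abs_mult power_abs mult_right_mono)
  qed
  show ?case by (rule summable_comparison_test'[OF summable bound])
qed

lemma nested_sum_nonneg: "(\<And>g n. g \<in> set gs \<Longrightarrow> 0 \<le> g n) \<Longrightarrow> 0 \<le> nested_sum N (gs :: (nat \<Rightarrow> real) list)"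
  by (induction gs arbitrary: N) (auto intro!: sum_nonneg)

lemma nested_sum_le_power:
  fixes gs :: "(nat \<Rightarrow> real) list"
  assumes "\<And>g n. g \<in> set gs \<Longrightarrow> 0 \<le> g n" "\<And>g n. g \<in> set gs \<Longrightarrow> 1 \<le> n \<Longrightarrow> g n \<le> B"
  shows "nested_sum N gs \<le> (B * real N) ^ length gs"
  using assms
proof (induction gs arbitrary: N)
  case (Cons g gs)
  have "0 \<le> B" using Cons.prems[of g 1] by force
  have "nested_sum N (g # gs) \<le> (\<Sum>n\<in>{1..<N}. B * (B * real N) ^ length gs)"
    unfolding nested_sum.simps
  proof (rule sum_mono)
    fix n assume n: "n \<in> {1..<N}"
    have "nested_sum n gs \<le> (B * real n) ^ length gs" using Cons by auto
    also have "\<dots> \<le> (B * real N) ^ length gs"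
      using n \<open>0 \<le> B\<close> by (intro power_mono mult_left_mono) auto
    finally show "g n * nested_sum n gs \<le> B * (B * real N) ^ length gs"
      using n Cons.prems nested_sum_nonneg[of gs n] \<open>0 \<le> B\<close> by (intro mult_mono) auto
  qed
  also have "\<dots> \<le> real N * (B * (B * real N) ^ length gs)"
    using \<open>0 \<le> B\<close> by (simp add: mult_right_mono)
  also have "\<dots> = (B * real N) ^ length (g # gs)"
    by (simp add: algebra_simps)
  finally show ?case .
qed simp

lemma norm_tuple_prod: "norm (tuple_prod (gs :: (nat \<Rightarrow> complex) list) ks) = tuple_prod (map (\<lambda>g n. norm (g n)) gs) ks"
  by (simp add: tuple_prod_def prod_norm[symmetric])

text \<open>Absolute convergence: a geometrically decaying first factor beats the polynomial number
  \<open>n\<^sup>d\<close> of tuples below \<open>n\<close> on which the remaining, bounded factors are summed.\<close>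

lemma nested_sum_norm_le:
  fixes g :: "nat \<Rightarrow> complex"
  assumes r: "0 \<le> r" "r < 1" and head: "\<And>n. 1 \<le> n \<Longrightarrow> norm (g n) \<le> C * r ^ n"
    and tail: "\<And>h n. h \<in> set hs \<Longrightarrow> 1 \<le> n \<Longrightarrow> norm (h n) \<le> B"
  shows "nested_sum N (map (\<lambda>h n. norm (h n)) (g # hs))
    \<le> \<bar>C\<bar> * \<bar>B\<bar> ^ length hs * (\<Sum>n. real n ^ length hs * r ^ n)"
proof -
  let ?d = "length hs" and ?S = "\<lambda>n. nested_sum n (map (\<lambda>h n. norm (h n)) hs)"
  have "nested_sum N (map (\<lambda>h n. norm (h n)) (g # hs)) \<le> (\<Sum>n\<in>{1..<N}. \<bar>C\<bar> * r ^ n * (\<bar>B\<bar> * real n) ^ ?d)"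
    unfolding list.map nested_sum.simps
  proof (rule sum_mono)
    fix n assume n: "n \<in> {1..<N}"
    have "?S n \<le> (\<bar>B\<bar> * real n) ^ length (map (\<lambda>h n. norm (h n)) hs)"
      by (rule nested_sum_le_power) (auto intro: order_trans[OF tail abs_ge_self])
    moreover have "norm (g n) \<le> \<bar>C\<bar> * r ^ n"
      using head[of n] n mult_right_mono[OF abs_ge_self zero_le_power[OF r(1)], of C n] by simp
    ultimately show "norm (g n) * ?S n \<le> \<bar>C\<bar> * r ^ n * (\<bar>B\<bar> * real n) ^ ?d"
      using nested_sum_nonneg[of "map (\<lambda>h n. norm (h n)) hs" n] r by (intro mult_mono) force+
  qed
  also have "\<dots> = \<bar>C\<bar> * \<bar>B\<bar> ^ ?d * (\<Sum>n\<in>{1..<N}. real n ^ ?d * r ^ n)"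
    by (simp add: sum_distrib_left power_mult_distrib algebra_simps)
  also have "\<dots> \<le> \<bar>C\<bar> * \<bar>B\<bar> ^ ?d * (\<Sum>n. real n ^ ?d * r ^ n)"
    using r by (intro mult_left_mono sum_le_suminf summable_real_power_mult_geometric) auto
  finally show ?thesis .
qed

lemma tuple_prod_summable_on:
  fixes g :: "nat \<Rightarrow> complex"
  assumes "0 \<le> r" "r < 1" "\<And>n. 1 \<le> n \<Longrightarrow> norm (g n) \<le> C * r ^ n"
    and tail: "\<And>h. h \<in> set hs \<Longrightarrow> bounded (h ` {1..})"
  shows "tuple_prod (g # hs) summable_on dec_tuples (length (g # hs))"
proof -
  obtain B where B: "\<And>h n. h \<in> set hs \<Longrightarrow> 1 \<le> n \<Longrightarrow> norm (h n) \<le> B"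
    using bounded_UN[of "set hs" "\<lambda>h. h ` {1..}"] tail unfolding bounded_iff by force
  define K where "K = \<bar>C\<bar> * \<bar>B\<bar> ^ length hs * (\<Sum>n. real n ^ length hs * r ^ n)"
  have "(\<lambda>ks. norm (tuple_prod (g # hs) ks)) summable_on dec_tuples (length (g # hs))"
    unfolding norm_tuple_prod
  proof (intro nonneg_bdd_above_summable_on bdd_aboveI2)
    fix F assume "F \<in> {F. F \<subseteq> dec_tuples (length (g # hs)) \<and> finite F}"
    then obtain N where "F \<subseteq> dec_tuples_below N (length (g # hs))"
      using eventually_subset_dec_tuples_below
      by (metis (no_types, lifting) eventually_sequentially mem_Collect_eq order.refl)
    then have "sum (tuple_prod (map (\<lambda>h n. norm (h n)) (g # hs))) F
        \<le> nested_sum N (map (\<lambda>h n. norm (h n)) (g # hs))"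
      unfolding nested_sum_eq_sum_dec_tuples_below
      by (intro sum_mono2 finite_dec_tuples_below) (auto simp del: list.map simp: norm_tuple_prod[symmetric])
    also have "\<dots> \<le> K"
      unfolding K_def using assms(1-3) B by (rule nested_sum_norm_le)
    finally show "sum (tuple_prod (map (\<lambda>h n. norm (h n)) (g # hs))) F \<le> K" .
  qed (simp del: list.map add: norm_tuple_prod[symmetric])
  then show ?thesis by (rule abs_summable_summable)
qed

lemma nested_sum_tendsto_of_geometric_head:
  fixes g :: "nat \<Rightarrow> complex"
  assumes "0 \<le> r" "r < 1" "\<And>n. 1 \<le> n \<Longrightarrow> norm (g n) \<le> C * r ^ n"
    and "\<And>h. h \<in> set hs \<Longrightarrow> bounded (h ` {1..})"
  shows "(\<lambda>N. nested_sum N (g # hs)) \<longlonglongrightarrow> nested_infsum (g # hs)"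
  using assms by (intro nested_sum_tendsto_nested_infsum tuple_prod_summable_on)

section \<open>The factors \<open>q\<^sup>k\<^sup>t / (1 - q\<^sup>k)\<^sup>s\<close>\<close>

definition zq_factor :: "complex \<Rightarrow> int \<Rightarrow> int \<Rightarrow> nat \<Rightarrow> complex" where
  "zq_factor q t s n = q powi (int n * t) / (1 - q ^ n) powi s"

lemma zq_ts_eq_nested_infsum:
  "length t = length s \<Longrightarrow> zq_ts q t s = nested_infsum (map2 (zq_factor q) t s)"
  unfolding zq_ts_def nested_infsum_def tuple_prod_def zq_factor_def
  by (auto intro!: infsum_cong prod.cong)

lemma zq_factor_of_nat: "zq_factor q (int t) s n = (q ^ n) ^ t / (1 - q ^ n) powi s"
  by (simp add: zq_factor_def power_mult flip: of_nat_mult)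

lemma norm_inverse_power_int_le:
  fixes z :: complex
  assumes "0 < c" "c \<le> 1" "c \<le> norm z" "norm z \<le> 2"
  shows "norm (1 / z powi k) \<le> (2 / c) ^ nat \<bar>k\<bar>"
proof (cases "0 \<le> k")
  case True
  then obtain m where k: "k = int m" by (metis nonneg_eq_int)
  have "0 < norm z" using assms by linarith
  then have "1 / norm z \<le> 1 / c"
    using assms by (intro divide_left_mono) auto
  also have "\<dots> \<le> 2 / c"
    using assms by (intro divide_right_mono) auto
  finally have "1 / norm z \<le> 2 / c" .
  have "norm (1 / z powi k) = (1 / norm z) ^ m" by (simp add: k norm_divide norm_power power_divide)
  also have "\<dots> \<le> (2 / c) ^ m"
    using \<open>1 / norm z \<le> 2 / c\<close> by (intro power_mono) auto
  finally show ?thesis by (simp add: k)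
next
  case False
  then obtain m where k: "k = - int m" by (metis nonpos_int_cases not_le order_less_imp_le)
  have "2 \<le> 2 / c" using assms by (simp add: le_divide_eq)
  have "norm (1 / z powi k) = norm z ^ m" by (simp add: k power_int_minus norm_power divide_inverse)
  also have "\<dots> \<le> (2 / c) ^ m"
    using assms \<open>2 \<le> 2 / c\<close> by (intro power_mono) auto
  finally show ?thesis by (simp add: k)
qed

context
  fixes q :: complex
  assumes q: "norm q < 1"
begin

lemma norm_power_le_norm: "1 \<le> n \<Longrightarrow> norm (q ^ n) \<le> norm q"
  using power_decreasing[of 1 n "norm q"] q by (simp add: norm_power)

lemma norm_one_minus_power_ge: "1 \<le> n \<Longrightarrow> 1 - norm q \<le> norm (1 - q ^ n)"
  using norm_power_le_norm norm_triangle_ineq2[of 1 "q ^ n"] by force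

lemma one_minus_power_nonzero: "1 \<le> n \<Longrightarrow> 1 - q ^ n \<noteq> 0"
  using norm_one_minus_power_ge q by fastforce

lemma norm_one_minus_power_le: "norm (1 - q ^ n) \<le> 2"
  using norm_triangle_ineq4[of 1 "q ^ n"] power_le_one[of "norm q" n] q by (simp add: norm_power)

lemma norm_zq_factor_le:
  assumes "1 \<le> n"
  shows "norm (zq_factor q (int t) s n) \<le> (2 / (1 - norm q)) ^ nat \<bar>s\<bar> * norm q ^ (n * t)"
proof -
  have "norm (zq_factor q (int t) s n) = norm (1 / (1 - q ^ n) powi s) * norm q ^ (n * t)"
    by (simp add: zq_factor_of_nat norm_divide norm_power power_mult)
  also have "\<dots> \<le> (2 / (1 - norm q)) ^ nat \<bar>s\<bar> * norm q ^ (n * t)"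
    using q assms norm_one_minus_power_ge norm_one_minus_power_le
    by (intro mult_right_mono norm_inverse_power_int_le) auto
  finally show ?thesis .
qed

lemma bounded_zq_factor: "bounded (zq_factor q (int t) s ` {1..})"
  unfolding bounded_iff
proof (intro exI ballI)
  fix x assume "x \<in> zq_factor q (int t) s ` {1..}"
  then obtain n where "1 \<le> n" "x = zq_factor q (int t) s n" by auto
  moreover have "norm q ^ (n * t) \<le> 1" using q by (simp add: power_le_one)
  ultimately show "norm x \<le> (2 / (1 - norm q)) ^ nat \<bar>s\<bar>"
    using norm_zq_factor_le[of n t s] q
    by (smt (verit) mult_left_le zero_le_divide_iff zero_le_power)
qed

lemma nested_sum_zq_factor_tendsto:
  assumes "\<And>h. h \<in> set hs \<Longrightarrow> \<exists>t s. h = zq_factor q (int t) s"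
  shows "(\<lambda>N. nested_sum N (zq_factor q (int (Suc t)) s # hs))
    \<longlonglongrightarrow> nested_infsum (zq_factor q (int (Suc t)) s # hs)"
proof (rule nested_sum_tendsto_of_geometric_head)
  fix n :: nat assume "1 \<le> n"
  have "norm q ^ (n * Suc t) \<le> norm q ^ n"
    using q by (intro power_decreasing) auto
  then show "norm (zq_factor q (int (Suc t)) s n) \<le> (2 / (1 - norm q)) ^ nat \<bar>s\<bar> * norm q ^ n"
    using norm_zq_factor_le[OF \<open>1 \<le> n\<close>, of "Suc t" s] q
    by (smt (verit) mult_left_mono zero_le_divide_iff zero_le_power)
qed (use q assms bounded_zq_factor in auto)

lemma zq_factor_mult:
  "1 \<le> n \<Longrightarrow> zq_factor q (int t) s n * zq_factor q (int t') s' n = zq_factor q (int (t + t')) (s + s') n"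
  using one_minus_power_nonzero[of n]
  by (simp add: zq_factor_of_nat power_int_add power_add del: of_nat_add)

lemma zq_factor_split:
  assumes "1 \<le> n"
  shows "zq_factor q (int t) s n = zq_factor q (int (Suc t)) s n + zq_factor q (int t) (s - 1) n"
proof -
  define z where "z = 1 - q ^ n"
  have "z \<noteq> 0" using one_minus_power_nonzero[OF assms] by (simp add: z_def)
  then have "z powi (s - 1) = z powi s / z" by (simp add: power_int_diff)
  then have "zq_factor q (int (Suc t)) s n + zq_factor q (int t) (s - 1) n
      = (q ^ n) ^ t * (q ^ n + z) / z powi s"
    using \<open>z \<noteq> 0\<close> by (simp add: zq_factor_of_nat z_def[symmetric] add_divide_distrib algebra_simps del: of_nat_Suc)
  also have "\<dots> = zq_factor q (int t) s n"
    by (simp add: zq_factor_of_nat z_def)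
  finally show ?thesis ..
qed

end

section \<open>Type \<open>I\<close>\<close>

definition weightI :: "complex \<Rightarrow> letterI \<Rightarrow> nat \<Rightarrow> complex" where
  "weightI q a n = MI q n a"

lemma zqI_eq_nested_infsum: "zqI q w = nested_infsum (map (weightI q) w)"
  unfolding zqI_def nested_infsum_def tuple_prod_def length_map
  by (intro infsum_cong prod.cong) (simp_all add: weightI_def)

lemma weightI_Theta: "weightI q Theta = zq_factor q 1 1"
  by (rule ext) (simp add: weightI_def zq_factor_def)

lemma weightI_Z: "weightI q (Z s) = zq_factor q (int (s - 1)) (int s)"
proof (rule ext)
  fix n
  have "weightI q (Z s) n = (q ^ n) ^ (s - 1) / (1 - q ^ n) ^ s"
    by (simp add: weightI_def power_mult[symmetric] mult.commute)
  also have "\<dots> = zq_factor q (int (s - 1)) (int s) n"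
    by (simp only: zq_factor_of_nat power_int_of_nat)
  finally show "weightI q (Z s) n = zq_factor q (int (s - 1)) (int s) n" .
qed

context
  fixes q :: complex
  assumes q: "norm q < 1"
begin

lemma weightI_bracketI:
  assumes "validI a" "validI b" "1 \<le> n"
  shows "lc_eval (\<lambda>l. weightI q l n) (bracketI a b) = weightI q a n * weightI q b n"
proof -
  note mult = zq_factor_mult[OF q \<open>1 \<le> n\<close>] and split = zq_factor_split[OF q \<open>1 \<le> n\<close>]
  show ?thesis
  proof (cases a)
    case Theta
    show ?thesis
    proof (cases b)
      case Theta
      then show ?thesis
        using \<open>a = Theta\<close> mult[of 1 1 1 1] split[of 1 2]
        by (simp add: weightI_Theta weightI_Z numeral_2_eq_2)
    next
      case (Z l)
      then obtain l' where "l = Suc l'" using assms(2) by (cases l) auto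
      then show ?thesis
        using \<open>a = Theta\<close> Z mult[of 1 1 l' "int l"] by (simp add: weightI_Theta weightI_Z)
    qed
  next
    case (Z k)
    then obtain k' where k: "k = Suc k'" using assms(1) by (cases k) auto
    show ?thesis
    proof (cases b)
      case Theta
      then show ?thesis
        using Z k mult[of k' "int k" 1 1] by (simp add: weightI_Theta weightI_Z)
    next
      case Zl: (Z l)
      then obtain l' where "l = Suc l'" using assms(2) by (cases l) auto
      then show ?thesis
        using Z Zl k mult[of k' "int k" l' "int l"] split[of "k' + l'" "int (k + l)"]
        by (simp add: weightI_Z algebra_simps)
    qed
  qed
qed

lemma nested_sum_stuffleI:
  assumes "admI x" "admI y"
  shows "lc_eval (\<lambda>w. nested_sum N (map (weightI q) w)) (stuffleI x y)
    = nested_sum N (map (weightI q) x) * nested_sum N (map (weightI q) y)"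
  unfolding stuffleI_def
proof (rule nested_sum_stuffle[of "{a. validI a}"])
  show "set x \<subseteq> {a. validI a}" "set y \<subseteq> {a. validI a}"
    using assms by (auto simp: admI_def)
qed (simp add: weightI_bracketI)

lemma weightI_eq_zq_factor:
  assumes "validI a"
  obtains t s where "weightI q a = zq_factor q (int t) s" "a \<noteq> Z 1 \<Longrightarrow> 1 \<le> t"
proof (cases a)
  case Theta
  then show ?thesis using that[of 1] weightI_Theta by simp
next
  case (Z s)
  with assms have "1 \<le> s" by simp
  show ?thesis
  proof (rule that)
    show "weightI q a = zq_factor q (int (s - 1)) (int s)" using Z weightI_Z by simp
    show "a \<noteq> Z 1 \<Longrightarrow> 1 \<le> s - 1" using Z \<open>1 \<le> s\<close> by simp
  qed
qed

lemma nested_sum_weightI_tendsto: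
  assumes "admI w"
  shows "(\<lambda>N. nested_sum N (map (weightI q) w)) \<longlonglongrightarrow> zqI q w"
proof (cases w)
  case (Cons a w')
  with assms have "validI a" "a \<noteq> Z 1" "\<forall>b\<in>set w'. validI b" by (simp_all add: admI_def)
  obtain t s where "weightI q a = zq_factor q (int t) s" "1 \<le> t"
    using weightI_eq_zq_factor[OF \<open>validI a\<close>] \<open>a \<noteq> Z 1\<close> by metis
  then have "weightI q a = zq_factor q (int (Suc (t - 1))) s" by simp
  moreover have "\<exists>t s. h = zq_factor q (int t) s" if h: "h \<in> set (map (weightI q) w')" for h
  proof -
    obtain b where "b \<in> set w'" "h = weightI q b" using h by auto
    with \<open>\<forall>b\<in>set w'. validI b\<close> show ?thesis
      using weightI_eq_zq_factor[of b] by metis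
  qed
  ultimately show ?thesis
    unfolding zqI_eq_nested_infsum Cons list.map
    by (simp only:) (rule nested_sum_zq_factor_tendsto[OF q])
qed (simp add: zqI_eq_nested_infsum)

lemma admI_stuffleI:
  assumes "admI x" "admI y" "w \<in> snd ` set (stuffleI x y)"
  shows "admI w"
proof -
  have "set w \<subseteq> {a. validI a}"
  proof (rule stuffle_letters_closed[where br = bracketI])
    fix a b assume "a \<in> {a. validI a}" "b \<in> {a. validI a}"
    then show "snd ` set (bracketI a b) \<subseteq> {a. validI a}" by (cases a; cases b) auto
  qed (use assms in \<open>auto simp: admI_def stuffleI_def\<close>)
  moreover have "w = [] \<or> hd w \<in> {a. validI a \<and> a \<noteq> Z 1}"
  proof (rule stuffle_hd_closed[where br = bracketI])
    fix a b assume "a \<in> {a. validI a \<and> a \<noteq> Z 1}" "b \<in> {a. validI a \<and> a \<noteq> Z 1}"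
    then show "snd ` set (bracketI a b) \<subseteq> {a. validI a \<and> a \<noteq> Z 1}" by (cases a; cases b) auto
  next
    show "x = [] \<or> hd x \<in> {a. validI a \<and> a \<noteq> Z 1}" "y = [] \<or> hd y \<in> {a. validI a \<and> a \<noteq> Z 1}"
      using assms(1,2) by (auto simp: admI_def neq_Nil_conv)
  qed (use assms(3) in \<open>simp add: stuffleI_def\<close>)
  ultimately show ?thesis by (auto simp: admI_def)
qed

lemma zqI_stuffleI:
  assumes "\<forall>(c, w)\<in>set u. admI w" "\<forall>(c, w)\<in>set v. admI w"
  shows "lc_eval (zqI q) (lc_bilin stuffleI u v) = lc_eval (zqI q) u * lc_eval (zqI q) v"
  by (rule lc_eval_bilin_limit[OF nested_sum_stuffleI nested_sum_weightI_tendsto admI_stuffleI assms])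

end

section \<open>Type \<open>II\<close>\<close>

definition weightII :: "complex \<Rightarrow> nat \<Rightarrow> nat \<Rightarrow> complex" where
  "weightII q s = zq_factor q (int s) (int s)"

lemma zqII_eq_nested_infsum: "zqII q w = nested_infsum (map (weightII q) w)"
  by (simp add: zqII_def zq_ts_eq_nested_infsum map2_map_map weightII_def[abs_def])

context
  fixes q :: complex
  assumes q: "norm q < 1"
begin

lemma weightII_add: "1 \<le> n \<Longrightarrow> weightII q (a + b) n = weightII q a n * weightII q b n"
  by (simp add: weightII_def zq_factor_mult[OF q])

lemma nested_sum_stuffle_bracketII:
  "lc_eval (\<lambda>w. nested_sum N (map (weightII q) w)) (stuffle bracketII x y)
    = nested_sum N (map (weightII q) x) * nested_sum N (map (weightII q) y)"
  by (rule nested_sum_stuffle[of UNIV]) (simp_all add: bracketII_def weightII_add)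

lemma nested_sum_weightII_tendsto:
  assumes "admII w"
  shows "(\<lambda>N. nested_sum N (map (weightII q) w)) \<longlonglongrightarrow> zqII q w"
proof (cases w)
  case (Cons a w')
  then obtain t where "a = Suc t" using assms by (cases a) (auto simp: admII_def)
  then have "weightII q a = zq_factor q (int (Suc t)) (int a)" by (simp add: weightII_def)
  then show ?thesis
    unfolding zqII_eq_nested_infsum Cons list.map
    by (simp only:) (rule nested_sum_zq_factor_tendsto[OF q], auto simp: weightII_def)
qed (simp add: zqII_eq_nested_infsum)

lemma admII_stuffleII:
  assumes "admII x" "admII y" "w \<in> snd ` set (stuffleII x y)"
  shows "admII w"
proof -
  have "w = [] \<or> hd w \<in> {1..}"
    by (rule stuffle_hd_closed[where br = bracketII])
       (use assms in \<open>auto simp: admII_def stuffleII_def bracketII_def\<close>)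
  then show ?thesis by (simp add: admII_def)
qed

lemma zqII_stuffleII:
  assumes "\<forall>(c, w)\<in>set u. admII w" "\<forall>(c, w)\<in>set v. admII w"
  shows "lc_eval (zqII q) (lc_bilin stuffleII u v) = lc_eval (zqII q) u * lc_eval (zqII q) v"
  by (rule lc_eval_bilin_limit[OF nested_sum_stuffle_bracketII[folded stuffleII_def]
        nested_sum_weightII_tendsto admII_stuffleII assms])

end

section \<open>Type \<open>III\<close>\<close>

fun weightsIII :: "complex \<Rightarrow> int \<times> int list \<Rightarrow> (nat \<Rightarrow> complex) list" where
  "weightsIII q (k, w) = zq_factor q 1 k # map (zq_factor q 0) w"

lemma zqIII_eq_nested_infsum: "zqIII q x = nested_infsum (weightsIII q x)"
  by (cases x) (simp add: zqIII_def zq_ts_eq_nested_infsum zip_replicate1 o_def)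

context
  fixes q :: complex
  assumes q: "norm q < 1"
begin

lemma nested_sum_stuffleB:
  "lc_eval (\<lambda>w. nested_sum N (map (zq_factor q 0) w)) (stuffleB x y)
    = nested_sum N (map (zq_factor q 0) x) * nested_sum N (map (zq_factor q 0) y)"
  unfolding stuffleB_def
  by (rule nested_sum_stuffle[of UNIV])
     (simp_all add: bracketB_def zq_factor_mult[OF q, of _ 0 _ 0, simplified])

lemma nested_sum_sigma_minus:
  "lc_eval (\<lambda>w. nested_sum n (map (zq_factor q 0) w)) (sigma_minus (l, v)) = nested_sum n (weightsIII q (l, v))"
proof -
  have diff: "zq_factor q 0 l m - zq_factor q 0 (l - 1) m = zq_factor q 1 l m" if "1 \<le> m" for m
    using zq_factor_split[OF q that, of 0 l] by simp
  have "lc_eval (\<lambda>w. nested_sum n (map (zq_factor q 0) w)) (sigma_minus (l, v))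
      = (\<Sum>m\<in>{1..<n}. (zq_factor q 0 l m - zq_factor q 0 (l - 1) m) * nested_sum m (map (zq_factor q 0) v))"
    by (simp add: sigma_minus_def sum_subtractf left_diff_distrib)
  also have "\<dots> = nested_sum n (weightsIII q (l, v))"
    by (auto intro!: sum.cong simp: diff)
  finally show ?thesis .
qed

lemma nested_sum_stuffleIII:
  "lc_eval (\<lambda>x. nested_sum N (weightsIII q x)) (stuffleIII (k, u) (l, v))
    = nested_sum N (weightsIII q (k, u)) * nested_sum N (weightsIII q (l, v))"
proof -
  let ?S = "\<lambda>n w. nested_sum n (map (zq_factor q 0) w)"
  have diag: "zq_factor q 1 (k + l) n - zq_factor q 1 (k + l - 1) n = zq_factor q 1 k n * zq_factor q 1 l n"
    if "1 \<le> n" for n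
    using zq_factor_mult[OF q that, of 1 k 1 l] zq_factor_split[OF q that, of 1 "k + l"] by simp
  have "lc_eval (\<lambda>x. nested_sum N (weightsIII q x)) (stuffleIII (k, u) (l, v)) =
      (\<Sum>n\<in>{1..<N}. zq_factor q 1 k n * (?S n u * nested_sum n (weightsIII q (l, v))))
    + (\<Sum>n\<in>{1..<N}. zq_factor q 1 l n * (nested_sum n (weightsIII q (k, u)) * ?S n v))
    + (\<Sum>n\<in>{1..<N}. (zq_factor q 1 (k + l) n - zq_factor q 1 (k + l - 1) n) * (?S n u * ?S n v))"
    unfolding stuffleIII.simps lc_eval_append lc_eval_lc_map lc_eval_map_uminus weightsIII.simps
      lc_eval_nested_sum_Cons
    by (simp add: lc_eval_bilin_mult[OF nested_sum_stuffleB] nested_sum_stuffleB nested_sum_sigma_minus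
        sum_subtractf left_diff_distrib)
  also have "\<dots> = nested_sum N (weightsIII q (k, u)) * nested_sum N (weightsIII q (l, v))"
    unfolding weightsIII.simps by (rule nested_sum_Cons_mult[symmetric]) (simp add: diag)
  finally show ?thesis .
qed

lemma nested_sum_weightsIII_tendsto: "(\<lambda>N. nested_sum N (weightsIII q x)) \<longlonglongrightarrow> zqIII q x"
proof (cases x)
  case (Pair k w)
  have "(\<lambda>N. nested_sum N (zq_factor q (int (Suc 0)) k # map (zq_factor q (int 0)) w))
      \<longlonglongrightarrow> nested_infsum (zq_factor q (int (Suc 0)) k # map (zq_factor q (int 0)) w)"
    by (rule nested_sum_zq_factor_tendsto[OF q]) (auto intro!: exI[where x = "0::nat"])
  then show ?thesis by (simp add: Pair zqIII_eq_nested_infsum)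
qed

lemma zqIII_stuffleIII:
  "lc_eval (zqIII q) (lc_bilin stuffleIII u v) = lc_eval (zqIII q) u * lc_eval (zqIII q) v"
proof (rule lc_eval_bilin_limit[where adm = "\<lambda>_. True" and F = "\<lambda>N x. nested_sum N (weightsIII q x)"])
  show "lc_eval (\<lambda>x. nested_sum N (weightsIII q x)) (stuffleIII x y)
      = nested_sum N (weightsIII q x) * nested_sum N (weightsIII q y)" for N x y
    using nested_sum_stuffleIII by (cases x; cases y) simp
qed (simp_all add: nested_sum_weightsIII_tendsto)

end

section \<open>Type \<open>IV\<close>\<close>

text \<open>The leading letters \<open>\<theta>\<close> and \<open>z\<^sub>s\<close> of type \<open>IV\<close> carry the same factors as the letters of
  type \<open>I\<close>, so the type \<open>I\<close> bracket supplies all diagonal identities.\<close>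

fun weightsIV :: "complex \<Rightarrow> wordIV \<Rightarrow> (nat \<Rightarrow> complex) list" where
  "weightsIV q One = []"
| "weightsIV q (ThW u) = weightI q Theta # map (weightII q) u"
| "weightsIV q (ZW s u) = weightI q (Z s) # map (weightII q) u"

lemma weightII_1: "weightII q 1 = weightI q Theta"
  by (simp add: weightII_def weightI_Theta)

lemma zqIV_eq_nested_infsum:
  assumes "admIV x"
  shows "zqIV q x = nested_infsum (weightsIV q x)"
proof (cases x)
  case (ThW u)
  then show ?thesis
    by (simp add: zq_ts_eq_nested_infsum map2_map_map weightII_def[abs_def] weightI_Theta)
next
  case (ZW s u)
  with assms have "int (s - 1) = int s - 1" by simp
  with ZW show ?thesis
    by (simp add: zq_ts_eq_nested_infsum map2_map_map weightII_def[abs_def] weightI_Z)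
qed simp

context
  fixes q :: complex
  assumes q: "norm q < 1"
begin

lemma nested_sum_sigma_plus:
  assumes "1 \<le> s"
  shows "lc_eval (\<lambda>w. nested_sum n (map (weightII q) w)) (sigma_plus s u)
    = nested_sum n (weightsIV q (ZW s u))"
proof -
  obtain s' where s: "s = Suc s'" using assms by (cases s) auto
  have split: "weightII q (Suc s') m + weightII q s' m = weightI q (Z (Suc s')) m" if "1 \<le> m" for m
    using zq_factor_split[OF q that, of s' "int s"] by (simp add: weightII_def weightI_Z s)
  have "lc_eval (\<lambda>w. nested_sum n (map (weightII q) w)) (sigma_plus s u)
      = (\<Sum>m\<in>{1..<n}. (weightII q s m + weightII q (s - 1) m) * nested_sum m (map (weightII q) u))"
    by (simp add: sigma_plus_def sum.distrib distrib_right)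
  also have "\<dots> = nested_sum n (weightsIV q (ZW s u))"
    by (auto intro!: sum.cong simp: split s)
  finally show ?thesis .
qed

lemma nested_sum_weightII_Cons_1:
  "nested_sum n (map (weightII q) (1 # v)) = nested_sum n (weightsIV q (ThW v))"
  by (simp only: list.map weightII_1 weightsIV.simps)

lemma lc_eval_lc_bilin_stuffleC_singleton:
  "lc_eval (\<lambda>w. nested_sum n (map (weightII q) w)) (lc_bilin stuffleC [(1, u)] xs)
    = nested_sum n (map (weightII q) u) * lc_eval (\<lambda>w. nested_sum n (map (weightII q) w)) xs"
  "lc_eval (\<lambda>w. nested_sum n (map (weightII q) w)) (lc_bilin stuffleC xs [(1, u)])
    = lc_eval (\<lambda>w. nested_sum n (map (weightII q) w)) xs * nested_sum n (map (weightII q) u)"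
  by (simp_all add: stuffleC_def lc_eval_bilin_mult nested_sum_stuffle_bracketII[OF q])

lemma nested_sum_stuffleIV_ZW_ZW:
  assumes "1 \<le> k" "1 \<le> l"
  shows "lc_eval (\<lambda>x. nested_sum N (weightsIV q x)) (stuffleIV (ZW k u) (ZW l v))
    = nested_sum N (weightsIV q (ZW k u)) * nested_sum N (weightsIV q (ZW l v))"
proof -
  let ?S = "\<lambda>n w. nested_sum n (map (weightII q) w)"
  note sigma = nested_sum_sigma_plus[OF assms(1)] nested_sum_sigma_plus[OF assms(2)]
  have "lc_eval (\<lambda>x. nested_sum N (weightsIV q x)) (stuffleIV (ZW k u) (ZW l v)) =
      (\<Sum>n\<in>{1..<N}. weightI q (Z k) n * (?S n u * nested_sum n (weightsIV q (ZW l v))))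
    + (\<Sum>n\<in>{1..<N}. weightI q (Z l) n * (nested_sum n (weightsIV q (ZW k u)) * ?S n v))
    + (\<Sum>n\<in>{1..<N}. lc_eval (\<lambda>a. weightI q a n) (bracketI (Z k) (Z l)) * (?S n u * ?S n v))"
    unfolding stuffleIV.simps lc_eval_append lc_eval_lc_map weightsIV.simps lc_eval_nested_sum_Cons
    by (simp add: lc_eval_lc_bilin_stuffleC_singleton sigma nested_sum_stuffle_bracketII[OF q, folded stuffleC_def]
        sum.distrib distrib_right)
  also have "\<dots> = nested_sum N (weightsIV q (ZW k u)) * nested_sum N (weightsIV q (ZW l v))"
    unfolding weightsIV.simps using assms
    by (intro nested_sum_Cons_mult[symmetric] weightI_bracketI[OF q]) auto
  finally show ?thesis .
qed

lemma nested_sum_stuffleIV_ZW_ThW: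
  assumes "1 \<le> k"
  shows "lc_eval (\<lambda>x. nested_sum N (weightsIV q x)) (stuffleIV (ZW k u) (ThW v))
    = nested_sum N (weightsIV q (ZW k u)) * nested_sum N (weightsIV q (ThW v))"
proof -
  let ?S = "\<lambda>n w. nested_sum n (map (weightII q) w)"
  note sigma = nested_sum_sigma_plus[OF assms]
  have "lc_eval (\<lambda>x. nested_sum N (weightsIV q x)) (stuffleIV (ZW k u) (ThW v)) =
      (\<Sum>n\<in>{1..<N}. weightI q (Z k) n * (?S n u * nested_sum n (weightsIV q (ThW v))))
    + (\<Sum>n\<in>{1..<N}. weightI q Theta n * (nested_sum n (weightsIV q (ZW k u)) * ?S n v))
    + (\<Sum>n\<in>{1..<N}. lc_eval (\<lambda>a. weightI q a n) (bracketI (Z k) Theta) * (?S n u * ?S n v))"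
    unfolding stuffleIV.simps lc_eval_append lc_eval_lc_map weightsIV.simps lc_eval_nested_sum_Cons
    by (simp add: lc_eval_lc_bilin_stuffleC_singleton sigma nested_sum_stuffle_bracketII[OF q, folded stuffleC_def]
        nested_sum_weightII_Cons_1[simplified])
  also have "\<dots> = nested_sum N (weightsIV q (ZW k u)) * nested_sum N (weightsIV q (ThW v))"
    unfolding weightsIV.simps using assms
    by (intro nested_sum_Cons_mult[symmetric] weightI_bracketI[OF q]) auto
  finally show ?thesis .
qed

lemma nested_sum_stuffleIV_ThW_ThW:
  "lc_eval (\<lambda>x. nested_sum N (weightsIV q x)) (stuffleIV (ThW u) (ThW v))
    = nested_sum N (weightsIV q (ThW u)) * nested_sum N (weightsIV q (ThW v))"
proof -
  let ?S = "\<lambda>n w. nested_sum n (map (weightII q) w)"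
  have "lc_eval (\<lambda>x. nested_sum N (weightsIV q x)) (stuffleIV (ThW u) (ThW v)) =
      (\<Sum>n\<in>{1..<N}. weightI q Theta n * (?S n u * nested_sum n (weightsIV q (ThW v))))
    + (\<Sum>n\<in>{1..<N}. weightI q Theta n * (nested_sum n (weightsIV q (ThW u)) * ?S n v))
    + (\<Sum>n\<in>{1..<N}. lc_eval (\<lambda>a. weightI q a n) (bracketI Theta Theta) * (?S n u * ?S n v))"
    unfolding stuffleIV.simps lc_eval_append lc_eval_lc_map lc_eval_map_uminus weightsIV.simps
      lc_eval_nested_sum_Cons
    by (simp add: nested_sum_stuffle_bracketII[OF q, folded stuffleC_def] nested_sum_weightII_Cons_1[simplified]
        sum_subtractf left_diff_distrib)
  also have "\<dots> = nested_sum N (weightsIV q (ThW u)) * nested_sum N (weightsIV q (ThW v))"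
    unfolding weightsIV.simps
    by (intro nested_sum_Cons_mult[symmetric] weightI_bracketI[OF q]) auto
  finally show ?thesis .
qed

lemma nested_sum_stuffleIV:
  assumes "admIV x" "admIV y"
  shows "lc_eval (\<lambda>x. nested_sum N (weightsIV q x)) (stuffleIV x y)
    = nested_sum N (weightsIV q x) * nested_sum N (weightsIV q y)"
proof (cases x)
  case (ThW u)
  with assms(2) show ?thesis
    using nested_sum_stuffleIV_ThW_ThW nested_sum_stuffleIV_ZW_ThW
    by (cases y) (simp_all add: mult.commute)
next
  case (ZW k u)
  with assms show ?thesis
    using nested_sum_stuffleIV_ZW_ZW nested_sum_stuffleIV_ZW_ThW by (cases y) simp_all
qed simp

lemma nested_sum_weightsIV_tendsto:
  assumes "admIV x"
  shows "(\<lambda>N. nested_sum N (weightsIV q x)) \<longlonglongrightarrow> zqIV q x"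
proof -
  have tail: "\<exists>t s. h = zq_factor q (int t) s" if "h \<in> set (map (weightII q) u)" for h u
    using that by (auto simp: weightII_def)
  have "(\<lambda>N. nested_sum N (weightsIV q x)) \<longlonglongrightarrow> nested_infsum (weightsIV q x)"
  proof (cases x)
    case (ThW u)
    have "(\<lambda>N. nested_sum N (zq_factor q (int (Suc 0)) 1 # map (weightII q) u))
        \<longlonglongrightarrow> nested_infsum (zq_factor q (int (Suc 0)) 1 # map (weightII q) u)"
      by (rule nested_sum_zq_factor_tendsto[OF q]) (rule tail)
    with ThW show ?thesis by (simp add: weightI_Theta)
  next
    case (ZW s u)
    with assms obtain t where "s = Suc (Suc t)" by (metis admIV.simps(3) add_2_eq_Suc le_iff_add)
    have "(\<lambda>N. nested_sum N (zq_factor q (int (Suc t)) (int s) # map (weightII q) u))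
        \<longlonglongrightarrow> nested_infsum (zq_factor q (int (Suc t)) (int s) # map (weightII q) u)"
      by (rule nested_sum_zq_factor_tendsto[OF q]) (rule tail)
    with ZW \<open>s = Suc (Suc t)\<close> show ?thesis by (simp add: weightI_Z)
  qed simp
  with assms show ?thesis by (simp add: zqIV_eq_nested_infsum)
qed

lemma admIV_stuffleIV: "admIV x \<Longrightarrow> admIV y \<Longrightarrow> w \<in> snd ` set (stuffleIV x y) \<Longrightarrow> admIV w"
  by (cases x; cases y) (auto simp: lc_map_def)

lemma zqIV_stuffleIV:
  assumes "\<forall>(c, w)\<in>set u. admIV w" "\<forall>(c, w)\<in>set v. admIV w"
  shows "lc_eval (zqIV q) (lc_bilin stuffleIV u v) = lc_eval (zqIV q) u * lc_eval (zqIV q) v"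
  by (rule lc_eval_bilin_limit[OF nested_sum_stuffleIV nested_sum_weightsIV_tendsto admIV_stuffleIV assms])

end

theorem theorem5p1:
  fixes q :: complex
  assumes "norm q < 1"
  shows "(\<forall>u v. (\<forall>(c, w)\<in>set u. admI w) \<longrightarrow> (\<forall>(c, w)\<in>set v. admI w) \<longrightarrow>
            lc_eval (zqI q) (lc_bilin stuffleI u v) = lc_eval (zqI q) u * lc_eval (zqI q) v)
       \<and> (\<forall>u v. (\<forall>(c, w)\<in>set u. admII w) \<longrightarrow> (\<forall>(c, w)\<in>set v. admII w) \<longrightarrow>
            lc_eval (zqII q) (lc_bilin stuffleII u v) = lc_eval (zqII q) u * lc_eval (zqII q) v)
       \<and> (\<forall>u v.
            lc_eval (zqIII q) (lc_bilin stuffleIII u v) = lc_eval (zqIII q) u * lc_eval (zqIII q) v)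
       \<and> (\<forall>u v. (\<forall>(c, w)\<in>set u. admIV w) \<longrightarrow> (\<forall>(c, w)\<in>set v. admIV w) \<longrightarrow>
            lc_eval (zqIV q) (lc_bilin stuffleIV u v) = lc_eval (zqIV q) u * lc_eval (zqIV q) v)"
  using zqI_stuffleI[OF assms] zqII_stuffleII[OF assms] zqIII_stuffleIII[OF assms]
    zqIV_stuffleIV[OF assms]
  by blast

end
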